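(* Let $\alpha=(\alpha_1,\dots,\alpha_t)\in\mathcal{P}(n)$, let $\alpha^*=(\gamma_1,\dots,\gamma_s)$ be its conjugate (so $s=\alpha_1$), let $\delta(\alpha)=(d_k)_{k\ge1}$, and let $r=t+s-1$. Then \[s(\alpha)+s(\alpha^* )=2\sum_{k=1}^r k\,d_k.\] Consequently, if $\alpha,\beta\in\mathcal{P}(n)$ satisfy $\delta(\alpha)=\delta(\beta)$, then $s(\alpha)+s(\alpha^* )=s(\beta)+s(\beta^* )$.
   Context: A partition of a positive integer $n$ is a finite non-increasing sequence $\alpha=(\alpha_1,\dots,\alpha_t)$ of positive integers with sum $n$; $\mathcal{P}(n)$ is the set of partitions of $n$, and $\alpha_i=0$ for $i>t$. The diagonal sequence is $\delta(\alpha)=(d_k)_{k\ge1}$ with $d_k=|\{i:1\le i\le k,\ \alpha_i+i-1\ge k\}|$. The conjugate $\alpha^*$ has parts $\alpha^*_j=|\{i:\alpha_i\ge j\}|$. For a partition $\alpha=(\alpha_1,\dots,\alpha_t)$, $s(\alpha)=\sum_{i=1}^t\alpha_i^2$. *)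

theory Defs
  imports Main
begin

definition partitions :: "nat \<Rightarrow> nat list set" where
  "partitions n = {a. sorted_wrt (\<ge>) a \<and> (\<forall>x\<in>set a. 0 < x) \<and> sum_list a = n}"

text \<open>1-indexed part, with value 0 beyond the length.\<close>
definition part :: "nat list \<Rightarrow> nat \<Rightarrow> nat" where
  "part a i = (if 1 \<le> i \<and> i \<le> length a then a ! (i - 1) else 0)"

definition conj_part :: "nat list \<Rightarrow> nat list" where
  "conj_part a = map (\<lambda>j. card {i. 1 \<le> i \<and> i \<le> length a \<and> part a i \<ge> j}) [1..<part a 1 + 1]"

definition diag :: "nat list \<Rightarrow> nat \<Rightarrow> nat" where
  "diag a k = card {i. 1 \<le> i \<and> i \<le> k \<and> part a i + i - 1 \<ge> k}"

definition sq_sum :: "nat list \<Rightarrow> nat" where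
  "sq_sum a = (\<Sum>x\<leftarrow>a. x ^ 2)"

end

theory Submission
  imports Defs
begin

text \<open>Both sides are sums over the cells \<open>(i, j)\<close>, \<open>1 \<le> j \<le> \<alpha>\<^sub>i\<close>, of the Young diagram.
  Row \<open>i\<close> contributes \<open>\<alpha>\<^sub>i\<^sup>2\<close> to \<open>s(\<alpha>)\<close>, and, writing each \<open>\<gamma>\<^sub>j\<^sup>2\<close> as the sum of the
  first \<open>\<gamma>\<^sub>j\<close> odd numbers, \<open>\<alpha>\<^sub>i (2i - 1)\<close> to \<open>s(\<alpha>\<^sup>*)\<close>. Together this is
  \<open>2 (i + (i + 1) + \<dots> + (i + \<alpha>\<^sub>i - 1))\<close>, twice the sum of the antidiagonal indices
  \<open>k = i + j - 1\<close> of the cells of row \<open>i\<close>; and \<open>d\<^sub>k\<close> is exactly the number of cells on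
  antidiagonal \<open>k\<close>.\<close>

lemma double_sum_interval:
  fixes i p :: nat
  assumes "1 \<le> i"
  shows "2 * (\<Sum>k\<in>{i..<p + i}. k) = p * (2 * i - 1) + p ^ 2"
proof -
  obtain j where "i = Suc j" using assms by (cases i) auto
  then show ?thesis by (induction p) (auto simp: power2_eq_square algebra_simps)
qed

lemma sum_odd_numbers: "(\<Sum>i=1..m. 2 * i - 1) = (m :: nat) ^ 2"
  by (induction m) (auto simp: power2_eq_square)

lemma down_closed_eq_atLeastAtMost_card:
  fixes S :: "nat set"
  assumes "finite S" "0 \<notin> S"
    and down_closed: "\<And>i i'. i' \<in> S \<Longrightarrow> 1 \<le> i \<Longrightarrow> i \<le> i' \<Longrightarrow> i \<in> S"
  shows "S = {1..card S}"
proof (cases "S = {}")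
  case False
  have "S = {1..Max S}"
  proof
    show "S \<subseteq> {1..Max S}"
      using assms by (auto simp: Suc_le_eq intro: gr0I)
    show "{1..Max S} \<subseteq> S"
      using down_closed Max_in[OF assms(1) False] by auto
  qed
  then show ?thesis by (metis card_atLeastAtMost diff_Suc_1)
qed simp

lemma part_antimono:
  assumes "sorted_wrt (\<ge>) a" "1 \<le> i" "i \<le> i'"
  shows "part a i' \<le> part a i"
proof (cases "i' \<le> length a \<and> i \<noteq> i'")
  case True
  then have "a ! (i' - 1) \<le> a ! (i - 1)"
    using assms by (auto simp: sorted_wrt_iff_nth_less)
  then show ?thesis using assms True by (simp add: part_def)
qed (auto simp: part_def)

lemma sq_sum_eq_sum_part: "sq_sum a = (\<Sum>i=1..length a. part a i ^ 2)"
proof -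
  have "sq_sum a = (\<Sum>i<length a. (a ! i) ^ 2)"
    unfolding sq_sum_def by (simp add: sum_list_sum_nth atLeast0LessThan)
  also have "\<dots> = (\<Sum>i<length a. part a (Suc i) ^ 2)"
    by (rule sum.cong) (auto simp: part_def)
  also have "\<dots> = (\<Sum>i=1..length a. part a i ^ 2)"
    by (simp add: sum.atLeast1_atMost_eq)
  finally show ?thesis .
qed

lemma length_conj_part: "length (conj_part a) = part a 1"
  by (simp add: conj_part_def)

lemma sq_sum_conj_part:
  assumes "sorted_wrt (\<ge>) a"
  shows "sq_sum (conj_part a) = (\<Sum>i=1..length a. part a i * (2 * i - 1))"
proof -
  let ?t = "length a" and ?s = "part a 1"
  define S where "S j = {i. 1 \<le> i \<and> i \<le> ?t \<and> part a i \<ge> j}" for j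
  have "sq_sum (conj_part a) = (\<Sum>j\<leftarrow>[1..<?s + 1]. card (S j) ^ 2)"
    unfolding sq_sum_def conj_part_def S_def by (simp add: comp_def)
  also have "\<dots> = (\<Sum>j=1..?s. card (S j) ^ 2)"
    by (simp only: sum_set_upt_conv_sum_list_nat[symmetric] set_upt
        Suc_eq_plus1[symmetric] atLeastLessThanSuc_atLeastAtMost)
  also have "\<dots> = (\<Sum>j=1..?s. \<Sum>i\<in>S j. 2 * i - 1)"
  proof (rule sum.cong[OF refl])
    fix j
    have "S j = {1..card (S j)}"
      using part_antimono[OF assms]
      by (intro down_closed_eq_atLeastAtMost_card) (auto simp: S_def, force)
    then show "card (S j) ^ 2 = (\<Sum>i\<in>S j. 2 * i - 1)"
      by (metis sum_odd_numbers)
  qed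
  also have "\<dots> = (\<Sum>j=1..?s. \<Sum>i=1..?t. if j \<le> part a i then 2 * i - 1 else 0)"
  proof (rule sum.cong[OF refl])
    fix j
    have "S j = {1..?t} \<inter> {i. j \<le> part a i}" by (auto simp: S_def)
    then show "(\<Sum>i\<in>S j. 2 * i - 1) = (\<Sum>i=1..?t. if j \<le> part a i then 2 * i - 1 else 0)"
      by (simp add: sum.If_cases)
  qed
  also have "\<dots> = (\<Sum>i=1..?t. \<Sum>j=1..?s. if j \<le> part a i then 2 * i - 1 else 0)"
    by (rule sum.swap)
  also have "\<dots> = (\<Sum>i=1..?t. part a i * (2 * i - 1))"
  proof (rule sum.cong[OF refl])
    fix i assume "i \<in> {1..?t}"
    then have "{1..?s} \<inter> {j. j \<le> part a i} = {1..part a i}"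
      using part_antimono[OF assms, of 1 i] by auto
    then show "(\<Sum>j=1..?s. if j \<le> part a i then 2 * i - 1 else 0) = part a i * (2 * i - 1)"
      by (simp add: sum.If_cases)
  qed
  finally show ?thesis .
qed

lemma diag_eq_card_rows:
  "diag a k = card ({1..length a} \<inter> {i. i \<le> k \<and> k < part a i + i})"
proof -
  have "{i. 1 \<le> i \<and> i \<le> k \<and> part a i + i - 1 \<ge> k}
        = {1..length a} \<inter> {i. i \<le> k \<and> k < part a i + i}"
    by (auto simp: part_def split: if_splits)
  then show ?thesis by (simp add: diag_def)
qed

lemma double_weighted_diag_sum:
  assumes "\<And>i. 1 \<le> i \<Longrightarrow> i \<le> length a \<Longrightarrow> part a i + i - 1 \<le> N"
  shows "2 * (\<Sum>k=1..N. k * diag a k)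
         = (\<Sum>i=1..length a. part a i * (2 * i - 1) + part a i ^ 2)"
proof -
  let ?t = "length a"
  have "(\<Sum>k=1..N. k * diag a k)
        = (\<Sum>k=1..N. \<Sum>i=1..?t. if i \<le> k \<and> k < part a i + i then k else 0)"
    by (simp add: diag_eq_card_rows sum.If_cases mult.commute)
  also have "\<dots> = (\<Sum>i=1..?t. \<Sum>k=1..N. if i \<le> k \<and> k < part a i + i then k else 0)"
    by (rule sum.swap)
  also have "\<dots> = (\<Sum>i=1..?t. \<Sum>k\<in>{i..<part a i + i}. k)"
  proof (rule sum.cong[OF refl])
    fix i assume "i \<in> {1..?t}"
    then have "{1..N} \<inter> {k. i \<le> k \<and> k < part a i + i} = {i..<part a i + i}"
      using assms[of i] by auto
    then show "(\<Sum>k=1..N. if i \<le> k \<and> k < part a i + i then k else 0)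
               = (\<Sum>k\<in>{i..<part a i + i}. k)"
      by (simp add: sum.If_cases)
  qed
  finally have "2 * (\<Sum>k=1..N. k * diag a k) = (\<Sum>i=1..?t. 2 * (\<Sum>k\<in>{i..<part a i + i}. k))"
    by (simp add: sum_distrib_left)
  also have "\<dots> = (\<Sum>i=1..?t. part a i * (2 * i - 1) + part a i ^ 2)"
    by (rule sum.cong[OF refl]) (simp add: double_sum_interval)
  finally show ?thesis .
qed

lemma sq_sum_add_sq_sum_conj_part:
  assumes "sorted_wrt (\<ge>) a" "length a + length (conj_part a) - 1 \<le> N"
  shows "sq_sum a + sq_sum (conj_part a) = 2 * (\<Sum>k=1..N. k * diag a k)"
proof -
  have "part a i + i - 1 \<le> N" if "1 \<le> i" "i \<le> length a" for i
    using part_antimono[OF assms(1) order_refl that(1)] that assms(2)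
    unfolding length_conj_part by linarith
  then have "2 * (\<Sum>k=1..N. k * diag a k)
             = (\<Sum>i=1..length a. part a i * (2 * i - 1)) + (\<Sum>i=1..length a. part a i ^ 2)"
    by (subst double_weighted_diag_sum) (simp_all add: sum.distrib)
  also have "\<dots> = sq_sum (conj_part a) + sq_sum a"
    by (simp only: sq_sum_eq_sum_part[of a] sq_sum_conj_part[OF assms(1)])
  finally show ?thesis by simp
qed

theorem proposition2p9:
  fixes n :: nat and \<alpha> \<beta> :: "nat list"
  assumes "0 < n"
  shows "(\<alpha> \<in> partitions n \<longrightarrow>
           sq_sum \<alpha> + sq_sum (conj_part \<alpha>)
             = 2 * (\<Sum>k = 1..length \<alpha> + length (conj_part \<alpha>) - 1. k * diag \<alpha> k))
       \<and> (\<alpha> \<in> partitions n \<and> \<beta> \<in> partitions n \<and> (\<forall>k\<ge>1. diag \<alpha> k = diag \<beta> k) \<longrightarrow>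
           sq_sum \<alpha> + sq_sum (conj_part \<alpha>) = sq_sum \<beta> + sq_sum (conj_part \<beta>))"
proof (intro conjI impI)
  assume "\<alpha> \<in> partitions n"
  then show "sq_sum \<alpha> + sq_sum (conj_part \<alpha>)
             = 2 * (\<Sum>k = 1..length \<alpha> + length (conj_part \<alpha>) - 1. k * diag \<alpha> k)"
    by (intro sq_sum_add_sq_sum_conj_part) (simp_all add: partitions_def)
next
  assume h: "\<alpha> \<in> partitions n \<and> \<beta> \<in> partitions n \<and> (\<forall>k\<ge>1. diag \<alpha> k = diag \<beta> k)"
  define N where "N = max (length \<alpha> + length (conj_part \<alpha>)) (length \<beta> + length (conj_part \<beta>))"
  have "sq_sum \<alpha> + sq_sum (conj_part \<alpha>) = 2 * (\<Sum>k=1..N. k * diag \<alpha> k)"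
    using h by (intro sq_sum_add_sq_sum_conj_part) (auto simp: partitions_def N_def)
  also have "\<dots> = 2 * (\<Sum>k=1..N. k * diag \<beta> k)"
    using h by simp
  also have "\<dots> = sq_sum \<beta> + sq_sum (conj_part \<beta>)"
    using h by (intro sq_sum_add_sq_sum_conj_part[symmetric]) (auto simp: partitions_def N_def)
  finally show "sq_sum \<alpha> + sq_sum (conj_part \<alpha>) = sq_sum \<beta> + sq_sum (conj_part \<beta>)" .
qed

end
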